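(* Let $f: (\mathbb{R}^{+})^n \to (\mathbb{R}^{+})^n$ be homogeneous and monotone. Then $f$ has an eigenvector in $(\mathbb{R}^{+})^n$ if and only if some orbit $\{f^k(x) : k \in \mathbb{N}\}$ (with $x \in (\mathbb{R}^{+})^n$) is bounded in the Hilbert projective metric; moreover in that case all orbits of $f$ are bounded in the Hilbert projective metric.
   Context: Homogeneous: $f(\lambda x) = \lambda f(x)$ for all $\lambda > 0$; monotone: $x \le y$ componentwise implies $f(x) \le f(y)$. An eigenvector is $x \in (\mathbb{R}^{+})^n$ with $f(x) = \lambda x$ for some $\lambda > 0$. The Hilbert projective metric on $(\mathbb{R}^{+})^n$ is $d_H(y,z) = \max_i \log(y_i/z_i) - \min_i \log(y_i/z_i)$; a set $A$ is bounded in it if $\sup_{y,z \in A} d_H(y,z) < \infty$. *)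

theory Defs
  imports "HOL-Analysis.Analysis"
begin

definition pos_cone :: "(real^'n) set" where
  "pos_cone = {x. \<forall>i. x $ i > 0}"

definition homogeneous_on_cone :: "(real^'n \<Rightarrow> real^'n) \<Rightarrow> bool" where
  "homogeneous_on_cone f \<longleftrightarrow>
     (\<forall>x\<in>pos_cone. \<forall>l::real. l > 0 \<longrightarrow> f (l *\<^sub>R x) = l *\<^sub>R f x)"

definition monotone_on_cone :: "(real^'n \<Rightarrow> real^'n) \<Rightarrow> bool" where
  "monotone_on_cone f \<longleftrightarrow>
     (\<forall>x\<in>pos_cone. \<forall>y\<in>pos_cone. (\<forall>i. x $ i \<le> y $ i) \<longrightarrow> (\<forall>i. f x $ i \<le> f y $ i))"

definition is_eigenvector :: "(real^'n \<Rightarrow> real^'n) \<Rightarrow> real^'n \<Rightarrow> bool" where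
  "is_eigenvector f x \<longleftrightarrow> x \<in> pos_cone \<and> (\<exists>l::real. l > 0 \<and> f x = l *\<^sub>R x)"

definition hilbert_dist :: "real^'n \<Rightarrow> real^'n \<Rightarrow> real" where
  "hilbert_dist y z = (MAX i. ln (y $ i / z $ i)) - (MIN i. ln (y $ i / z $ i))"

definition hilbert_bounded :: "(real^'n) set \<Rightarrow> bool" where
  "hilbert_bounded A \<longleftrightarrow> bdd_above {hilbert_dist y z | y z. y \<in> A \<and> z \<in> A}"

end

theory Submission
  imports Defs
begin

text \<open>In logarithmic coordinates \<open>y = ln x\<close> the map \<open>f\<close> becomes \<open>F = ln \<circ> f \<circ> exp\<close>, which is
  topical: monotone and commuting with the addition of constant vectors. The Hilbert metric
  becomes the seminorm \<open>max (y - z) - min (y - z)\<close>, for which \<open>F\<close> is nonexpansive, and an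
  eigenvector becomes a point \<open>w\<close> with \<open>F w = w + c\<close>. Such a point moves along the constant
  direction under iteration, so nonexpansiveness bounds every orbit. Conversely, if one orbit
  is bounded by \<open>B\<close>, the normalised map \<open>G y = F y - (F y)\<^sub>i\<^sub>0\<close> maps the bounded convex set of
  points of the hyperplane \<open>y\<^sub>i\<^sub>0 = 0\<close> that eventually stay within \<open>B\<close> of the orbit of \<open>G\<close> into
  itself, and Brouwer's theorem yields a fixed point of \<open>G\<close>, i.e. an additive eigenvector
  of \<open>F\<close>.\<close>

lemma ex_Max_range_eq: "\<exists>i. (MAX j. g j) = g (i::'n::finite)"
proof -
  have "(MAX j. g j) \<in> range g"
    by (rule Max_in) auto
  then show ?thesis
    by (metis rangeE)
qed

lemma ex_Min_range_eq: "\<exists>i. (MIN j. g j) = g (i::'n::finite)"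
proof -
  have "(MIN j. g j) \<in> range g"
    by (rule Min_in) auto
  then show ?thesis
    by (metis rangeE)
qed

definition hilbert_seminorm :: "real^'n \<Rightarrow> real" where
  "hilbert_seminorm v = (MAX i. v $ i) - (MIN i. v $ i)"

lemma hilbert_seminorm_ge: "v $ i - v $ j \<le> hilbert_seminorm v"
  unfolding hilbert_seminorm_def by (simp add: diff_mono)

lemma hilbert_seminorm_le:
  assumes "\<And>i j. v $ i - v $ j \<le> c"
  shows "hilbert_seminorm v \<le> c"
proof -
  obtain i j where "(MAX k. v $ k) = v $ i" "(MIN k. v $ k) = v $ j"
    using ex_Max_range_eq ex_Min_range_eq by metis
  then show ?thesis
    unfolding hilbert_seminorm_def using assms by simp
qed

lemma hilbert_seminorm_triangle: "hilbert_seminorm (a + b) \<le> hilbert_seminorm a + hilbert_seminorm b"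
proof (rule hilbert_seminorm_le)
  fix i j
  show "(a + b) $ i - (a + b) $ j \<le> hilbert_seminorm a + hilbert_seminorm b"
    using hilbert_seminorm_ge[of a i j] hilbert_seminorm_ge[of b i j] by simp
qed

lemma hilbert_seminorm_add_const [simp]: "hilbert_seminorm (a + vec c) = hilbert_seminorm a"
  unfolding hilbert_seminorm_def by (simp add: Max_add_commute Min_add_commute)

lemma hilbert_seminorm_minus_commute: "hilbert_seminorm (a - b) = hilbert_seminorm (b - a)"
proof -
  have "hilbert_seminorm (a - b) \<le> hilbert_seminorm (b - a)" for a b :: "real^'n"
  proof (rule hilbert_seminorm_le)
    fix i j
    show "(a - b) $ i - (a - b) $ j \<le> hilbert_seminorm (b - a)"
      using hilbert_seminorm_ge[of "b - a" j i] by simp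
  qed
  then show ?thesis
    using antisym by blast
qed

lemma hilbert_seminorm_convex:
  assumes "0 \<le> u" "0 \<le> w"
  shows "hilbert_seminorm (u *\<^sub>R a + w *\<^sub>R b) \<le> u * hilbert_seminorm a + w * hilbert_seminorm b"
proof (rule hilbert_seminorm_le)
  fix i j
  have "u * (a $ i - a $ j) \<le> u * hilbert_seminorm a"
    by (rule mult_left_mono[OF hilbert_seminorm_ge assms(1)])
  moreover have "w * (b $ i - b $ j) \<le> w * hilbert_seminorm b"
    by (rule mult_left_mono[OF hilbert_seminorm_ge assms(2)])
  ultimately show "(u *\<^sub>R a + w *\<^sub>R b) $ i - (u *\<^sub>R a + w *\<^sub>R b) $ j
      \<le> u * hilbert_seminorm a + w * hilbert_seminorm b"
    by (simp add: algebra_simps)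
qed

lemma norm_le_hilbert_seminorm:
  fixes y :: "real^'n"
  assumes "y $ i0 = 0"
  shows "norm y \<le> real CARD('n) * hilbert_seminorm y"
proof -
  have "\<bar>y $ i\<bar> \<le> hilbert_seminorm y" for i
    using hilbert_seminorm_ge[of y i i0] hilbert_seminorm_ge[of y i0 i] assms by linarith
  then have "(\<Sum>i\<in>UNIV. \<bar>y $ i\<bar>) \<le> (\<Sum>i\<in>(UNIV::'n set). hilbert_seminorm y)"
    by (intro sum_mono)
  then show ?thesis
    using norm_le_l1_cart[of y] by simp
qed

text \<open>Equivalent to \<open>F\<close> being monotone and satisfying \<open>F (y + vec c) = F y + vec c\<close>.\<close>

definition topical :: "(real^'n \<Rightarrow> real^'n) \<Rightarrow> bool" where
  "topical F \<longleftrightarrow>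
     (\<forall>y z i. (MIN j. (y - z) $ j) \<le> (F y - F z) $ i \<and> (F y - F z) $ i \<le> (MAX j. (y - z) $ j))"

lemma topical_hilbert_nonexpansive:
  assumes "topical F"
  shows "hilbert_seminorm (F y - F z) \<le> hilbert_seminorm (y - z)"
proof (rule hilbert_seminorm_le)
  fix i j
  have "(F y - F z) $ i \<le> (MAX j. (y - z) $ j)" "(MIN j. (y - z) $ j) \<le> (F y - F z) $ j"
    using assms unfolding topical_def by blast+
  then show "(F y - F z) $ i - (F y - F z) $ j \<le> hilbert_seminorm (y - z)"
    unfolding hilbert_seminorm_def by linarith
qed

lemma topical_funpow_hilbert_nonexpansive:
  assumes "topical F"
  shows "hilbert_seminorm ((F^^k) y - (F^^k) z) \<le> hilbert_seminorm (y - z)"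
  by (induction k) (auto intro: order_trans[OF topical_hilbert_nonexpansive[OF assms]])

lemma topical_add_const:
  assumes "topical F"
  shows "F (y + vec c) = F y + vec c"
proof -
  have "(MIN j. (y + vec c - y) $ j) \<le> (F (y + vec c) - F y) $ i \<and>
      (F (y + vec c) - F y) $ i \<le> (MAX j. (y + vec c - y) $ j)" for i
    using assms unfolding topical_def by blast
  then have "c \<le> (F (y + vec c) - F y) $ i \<and> (F (y + vec c) - F y) $ i \<le> c" for i
    by simp
  then show ?thesis
    by (simp add: vec_eq_iff algebra_simps order_antisym)
qed

lemma topical_component_lipschitz:
  fixes F :: "real^'n \<Rightarrow> real^'n"
  assumes "topical F"
  shows "1-lipschitz_on UNIV (\<lambda>y. F y $ i)"
proof (rule lipschitz_onI)
  fix y z :: "real^'n"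
  obtain a b where "(MAX j. (y - z) $ j) = (y - z) $ a" "(MIN j. (y - z) $ j) = (y - z) $ b"
    using ex_Max_range_eq ex_Min_range_eq by metis
  then have "(F y - F z) $ i \<le> (y - z) $ a" "(y - z) $ b \<le> (F y - F z) $ i"
    using assms unfolding topical_def by metis+
  moreover have "\<bar>(y - z) $ a\<bar> \<le> norm (y - z)" "\<bar>(y - z) $ b\<bar> \<le> norm (y - z)"
    by (rule component_le_norm_cart)+
  ultimately show "dist (F y $ i) (F z $ i) \<le> 1 * dist y z"
    by (simp add: dist_norm dist_real_def abs_le_iff)
qed simp

lemma topical_component_continuous:
  "topical F \<Longrightarrow> continuous_on UNIV (\<lambda>y. F y $ i)"
  by (rule lipschitz_on_continuous_on[OF topical_component_lipschitz])

lemma topical_funpow_additive_eigenvector: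
  assumes "topical F" "F w = w + vec c"
  shows "(F^^k) w = w + vec (real k * c)"
proof (induction k)
  case (Suc k)
  have "(F^^Suc k) w = F (w + vec (real k * c))"
    by (simp add: Suc)
  also have "\<dots> = F w + vec (real k * c)"
    by (rule topical_add_const[OF assms(1)])
  also have "\<dots> = w + vec (real (Suc k) * c)"
    by (simp add: assms(2) vec_eq_iff algebra_simps)
  finally show ?case .
qed (simp add: vec_eq_iff)

lemma topical_bounded_orbit_of_additive_eigenvector:
  assumes top: "topical F" and w: "F w = w + vec c"
  shows "hilbert_seminorm ((F^^k) y - (F^^m) y) \<le> 2 * hilbert_seminorm (y - w)"
proof -
  have orbit_diff: "(F^^k) y - (F^^m) y
      = ((F^^k) y - (F^^k) w) + ((F^^m) w - (F^^m) y) + vec (real k * c - real m * c)"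
    by (simp add: topical_funpow_additive_eigenvector[OF top w] vec_eq_iff algebra_simps)
  have "hilbert_seminorm ((F^^k) y - (F^^m) y)
      = hilbert_seminorm (((F^^k) y - (F^^k) w) + ((F^^m) w - (F^^m) y))"
    by (simp only: orbit_diff hilbert_seminorm_add_const)
  also have "\<dots> \<le> hilbert_seminorm ((F^^k) y - (F^^k) w) + hilbert_seminorm ((F^^m) w - (F^^m) y)"
    by (rule hilbert_seminorm_triangle)
  also have "\<dots> \<le> hilbert_seminorm (y - w) + hilbert_seminorm (w - y)"
    by (intro add_mono topical_funpow_hilbert_nonexpansive[OF top])
  also have "\<dots> = 2 * hilbert_seminorm (y - w)"
    using hilbert_seminorm_minus_commute[of w y] by simp
  finally show ?thesis .
qed

lemma topical_funpow_shift:
  assumes "topical F" and "\<And>y. G y = F y + vec (c y)"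
  shows "\<exists>d. (G^^k) y = (F^^k) y + vec d"
proof (induction k)
  case (Suc k)
  then obtain d where d: "(G^^k) y = (F^^k) y + vec d"
    by blast
  have "(G^^Suc k) y = F ((F^^k) y + vec d) + vec (c ((G^^k) y))"
    by (simp add: d assms(2))
  also have "\<dots> = (F^^Suc k) y + vec (d + c ((G^^k) y))"
    by (simp add: topical_add_const[OF assms(1)] vec_add)
  finally show ?case ..
qed (auto intro: exI[of _ 0])

lemma brouwer_invariant_subset:
  fixes G :: "'a::euclidean_space \<Rightarrow> 'a"
  assumes "bounded D" "convex D" "D \<noteq> {}" "continuous_on UNIV G" "G ` D \<subseteq> D"
  obtains y where "G y = y"
proof (rule brouwer)
  show "compact (closure D)" "convex (closure D)" "closure D \<noteq> {}"
    using assms(1-3) by (simp_all add: convex_closure)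
  show "continuous_on (closure D) G"
    using assms(4) by (rule continuous_on_subset) simp
  have "G ` closure D \<subseteq> closure D"
    using assms(4,5) closure_subset
    by (intro image_closure_subset) (auto intro: continuous_on_subset)
  then show "G \<in> closure D \<rightarrow> closure D"
    by blast
qed

lemma convex_eventually_hilbert_near:
  "convex {y. \<forall>\<^sub>F k in F. hilbert_seminorm (y - p k) \<le> B}"
  unfolding convex_def
proof (intro ballI allI impI)
  fix a b u v assume "a \<in> {y. \<forall>\<^sub>F k in F. hilbert_seminorm (y - p k) \<le> B}"
    "b \<in> {y. \<forall>\<^sub>F k in F. hilbert_seminorm (y - p k) \<le> B}"
    and uv: "0 \<le> u" "0 \<le> v" "u + v = (1::real)"
  then have "\<forall>\<^sub>F k in F. hilbert_seminorm (a - p k) \<le> B \<and> hilbert_seminorm (b - p k) \<le> B"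
    by (simp add: eventually_conj)
  then have "\<forall>\<^sub>F k in F. hilbert_seminorm (u *\<^sub>R a + v *\<^sub>R b - p k) \<le> B"
  proof (rule eventually_mono)
    fix k assume "hilbert_seminorm (a - p k) \<le> B \<and> hilbert_seminorm (b - p k) \<le> B"
    then have "u * hilbert_seminorm (a - p k) + v * hilbert_seminorm (b - p k) \<le> u * B + v * B"
      using uv by (intro add_mono mult_left_mono) auto
    moreover have "u *\<^sub>R a + v *\<^sub>R b - p k = u *\<^sub>R (a - p k) + v *\<^sub>R (b - p k)"
      using uv(3) by (simp add: algebra_simps flip: scaleR_add_left)
    ultimately show "hilbert_seminorm (u *\<^sub>R a + v *\<^sub>R b - p k) \<le> B"
      using hilbert_seminorm_convex[OF uv(1,2), of "a - p k" "b - p k"] uv(3)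
      by (simp add: distrib_right[symmetric])
  qed
  then show "u *\<^sub>R a + v *\<^sub>R b \<in> {y. \<forall>\<^sub>F k in F. hilbert_seminorm (y - p k) \<le> B}"
    by simp
qed

lemma fixed_point_of_bounded_orbit:
  fixes G :: "real^'n \<Rightarrow> real^'n"
  assumes cont: "continuous_on UNIV G"
    and nonexp: "\<And>y z. hilbert_seminorm (G y - G z) \<le> hilbert_seminorm (y - z)"
    and normalised: "\<And>y. G y $ i0 = 0"
    and orbit: "\<And>k m. hilbert_seminorm ((G^^k) x - (G^^m) x) \<le> B"
  obtains y where "G y = y"
proof -
  define D where
    "D = {y. y $ i0 = 0} \<inter> {y. \<forall>\<^sub>F k in sequentially. hilbert_seminorm (y - (G^^k) x) \<le> B}"
  have "G x \<in> D"
    using orbit[of 1] normalised by (simp add: D_def)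
  moreover have "convex D"
    unfolding D_def by (intro convex_Int convex_eventually_hilbert_near) (simp add: convex_def)
  moreover have "bounded D"
    unfolding bounded_iff
  proof (intro exI ballI)
    fix y assume "y \<in> D"
    then obtain m where m: "hilbert_seminorm (y - (G^^m) x) \<le> B" and "y $ i0 = 0"
      by (auto simp: D_def eventually_sequentially)
    have "hilbert_seminorm y
        \<le> hilbert_seminorm (y - (G^^m) x) + hilbert_seminorm ((G^^m) x - (G^^0) x) + hilbert_seminorm x"
      using hilbert_seminorm_triangle[of "y - (G^^m) x" "(G^^m) x - x"]
        hilbert_seminorm_triangle[of "y - x" x] by simp
    also have "\<dots> \<le> 2 * B + hilbert_seminorm x"
      using m orbit[of m 0] by simp
    finally show "norm y \<le> real CARD('n) * (2 * B + hilbert_seminorm x)"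
      using norm_le_hilbert_seminorm[OF \<open>y $ i0 = 0\<close>]
      by (meson order_trans mult_left_mono of_nat_0_le_iff)
  qed
  moreover have "G ` D \<subseteq> D"
  proof clarify
    fix y assume "y \<in> D"
    then have "\<forall>\<^sub>F k in sequentially. hilbert_seminorm (G y - (G^^Suc k) x) \<le> B"
      unfolding D_def by (auto elim: eventually_mono intro: order_trans[OF nonexp])
    then have "\<forall>\<^sub>F k in sequentially. hilbert_seminorm (G y - (G^^k) x) \<le> B"
      using eventually_sequentially_Suc[of "\<lambda>k. hilbert_seminorm (G y - (G^^k) x) \<le> B"] by blast
    then show "G y \<in> D"
      by (simp add: D_def normalised)
  qed
  ultimately show thesis
    using brouwer_invariant_subset[OF _ _ _ cont] that by blast
qed

lemma topical_additive_eigenvector_of_bounded_orbit: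
  fixes F :: "real^'n \<Rightarrow> real^'n"
  assumes top: "topical F" and orbit: "\<And>k m. hilbert_seminorm ((F^^k) x - (F^^m) x) \<le> B"
  obtains y c where "F y = y + vec c"
proof -
  fix i0 :: 'n
  define G where "G y = F y - vec (F y $ i0)" for y
  have G_shift: "G y = F y + vec (- F y $ i0)" for y
    by (simp add: G_def vec_eq_iff)
  have "continuous_on UNIV G"
  proof -
    have "continuous_on UNIV (\<lambda>y. \<chi> i. F y $ i - F y $ i0)"
      by (intro continuous_on_vec_lambda continuous_on_diff topical_component_continuous[OF top])
    moreover have "(\<lambda>y. \<chi> i. F y $ i - F y $ i0) = G"
      by (simp add: G_def vec_eq_iff fun_eq_iff)
    ultimately show ?thesis
      by metis
  qed
  moreover have "hilbert_seminorm (G y - G z) \<le> hilbert_seminorm (y - z)" for y z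
  proof -
    have "G y - G z = (F y - F z) + vec (F z $ i0 - F y $ i0)"
      by (simp add: G_def vec_eq_iff)
    then show ?thesis
      using topical_hilbert_nonexpansive[OF top, of y z] by simp
  qed
  moreover have "G y $ i0 = 0" for y
    by (simp add: G_def)
  moreover have "hilbert_seminorm ((G^^k) x - (G^^m) x) \<le> B" for k m
  proof -
    obtain c d where "(G^^k) x = (F^^k) x + vec c" "(G^^m) x = (F^^m) x + vec d"
      using topical_funpow_shift[OF top G_shift] by metis
    then have "(G^^k) x - (G^^m) x = ((F^^k) x - (F^^m) x) + vec (c - d)"
      by (simp add: vec_eq_iff)
    then show ?thesis
      using orbit[of k m] by simp
  qed
  ultimately obtain y where "G y = y"
    by (rule fixed_point_of_bounded_orbit)
  then have "F y = y + vec (F y $ i0)"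
    by (metis G_def diff_add_cancel)
  then show thesis
    by (rule that)
qed

definition vec_ln :: "real^'n \<Rightarrow> real^'n" where
  "vec_ln x = (\<chi> i. ln (x $ i))"

definition vec_exp :: "real^'n \<Rightarrow> real^'n" where
  "vec_exp y = (\<chi> i. exp (y $ i))"

lemma vec_exp_in_pos_cone: "vec_exp y \<in> pos_cone"
  by (simp add: vec_exp_def pos_cone_def)

lemma vec_exp_vec_ln: "x \<in> pos_cone \<Longrightarrow> vec_exp (vec_ln x) = x"
  by (simp add: vec_exp_def vec_ln_def pos_cone_def vec_eq_iff)

lemma hilbert_dist_vec_exp: "hilbert_dist (vec_exp a) (vec_exp b) = hilbert_seminorm (a - b)"
  unfolding hilbert_dist_def hilbert_seminorm_def vec_exp_def by (simp add: exp_diff[symmetric])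

lemma hilbert_bounded_iff:
  "hilbert_bounded A \<longleftrightarrow> (\<exists>B. \<forall>y\<in>A. \<forall>z\<in>A. hilbert_dist y z \<le> B)"
  unfolding hilbert_bounded_def bdd_above_def by blast

definition log_conjugate :: "(real^'n \<Rightarrow> real^'n) \<Rightarrow> real^'n \<Rightarrow> real^'n" where
  "log_conjugate f y = vec_ln (f (vec_exp y))"

lemma homogeneous_monotone_le_scaled:
  fixes f :: "real^'n \<Rightarrow> real^'n"
  assumes hom: "homogeneous_on_cone f" and mon: "monotone_on_cone f"
    and a: "a \<in> pos_cone" and b: "b \<in> pos_cone" and t: "t > 0"
  shows "(\<And>j. a $ j \<le> t * b $ j) \<Longrightarrow> f a $ i \<le> t * f b $ i"
    and "(\<And>j. t * b $ j \<le> a $ j) \<Longrightarrow> t * f b $ i \<le> f a $ i"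
proof -
  have tb: "t *\<^sub>R b \<in> pos_cone"
    using b t by (simp add: pos_cone_def)
  have scaled: "f (t *\<^sub>R b) $ i = t * f b $ i"
    using hom b t by (simp add: homogeneous_on_cone_def)
  show "f a $ i \<le> t * f b $ i" if "\<And>j. a $ j \<le> t * b $ j"
  proof -
    have "f a $ i \<le> f (t *\<^sub>R b) $ i"
      using mon a tb that unfolding monotone_on_cone_def by simp
    then show ?thesis
      by (simp only: scaled)
  qed
  show "t * f b $ i \<le> f a $ i" if "\<And>j. t * b $ j \<le> a $ j"
  proof -
    have "f (t *\<^sub>R b) $ i \<le> f a $ i"
      using mon a tb that unfolding monotone_on_cone_def by simp
    then show ?thesis
      by (simp only: scaled)
  qed
qed

lemma topical_log_conjugate:
  fixes f :: "real^'n \<Rightarrow> real^'n"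
  assumes maps: "\<forall>x\<in>pos_cone. f x \<in> pos_cone"
    and hom: "homogeneous_on_cone f" and mon: "monotone_on_cone f"
  shows "topical (log_conjugate f)"
  unfolding topical_def
proof (intro allI conjI)
  fix y z :: "real^'n" and i
  define M where "M = (MAX j. (y - z) $ j)"
  define m where "m = (MIN j. (y - z) $ j)"
  have pos: "f (vec_exp y) $ i > 0" "f (vec_exp z) $ i > 0"
    using maps vec_exp_in_pos_cone by (auto simp: pos_cone_def)
  have diff: "(log_conjugate f y - log_conjugate f z) $ i = ln (f (vec_exp y) $ i) - ln (f (vec_exp z) $ i)"
    by (simp add: log_conjugate_def vec_ln_def)
  have "y $ j - z $ j \<le> M" "m \<le> y $ j - z $ j" for j
    unfolding M_def m_def by simp_all
  then have "y $ j \<le> M + z $ j" "m + z $ j \<le> y $ j" for j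
    by (simp_all add: diff_le_eq le_diff_eq)
  then have "vec_exp y $ j \<le> exp M * vec_exp z $ j" "exp m * vec_exp z $ j \<le> vec_exp y $ j" for j
    by (simp_all add: vec_exp_def exp_add[symmetric])
  then have "f (vec_exp y) $ i \<le> exp M * f (vec_exp z) $ i"
    and "exp m * f (vec_exp z) $ i \<le> f (vec_exp y) $ i"
    using homogeneous_monotone_le_scaled[OF hom mon vec_exp_in_pos_cone vec_exp_in_pos_cone exp_gt_zero]
    by blast+
  with pos have "ln (f (vec_exp y) $ i) \<le> ln (exp M * f (vec_exp z) $ i)"
    and "ln (exp m * f (vec_exp z) $ i) \<le> ln (f (vec_exp y) $ i)"
    by simp_all
  with pos show "(log_conjugate f y - log_conjugate f z) $ i \<le> (MAX j. (y - z) $ j)"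
    and "(MIN j. (y - z) $ j) \<le> (log_conjugate f y - log_conjugate f z) $ i"
    unfolding diff M_def[symmetric] m_def[symmetric] by (simp_all add: ln_mult_pos)
qed

lemma funpow_log_conjugate:
  assumes maps: "\<forall>x\<in>pos_cone. f x \<in> pos_cone" and x: "x \<in> pos_cone"
  shows "(f^^k) x = vec_exp ((log_conjugate f ^^ k) (vec_ln x))"
  by (induction k) (simp_all add: x vec_exp_vec_ln log_conjugate_def maps vec_exp_in_pos_cone)

lemma hilbert_bounded_orbit_iff:
  assumes maps: "\<forall>x\<in>pos_cone. f x \<in> pos_cone" and x: "x \<in> pos_cone"
  shows "hilbert_bounded {(f ^^ k) x | k::nat. True} \<longleftrightarrow>
    (\<exists>B. \<forall>k m. hilbert_seminorm
        ((log_conjugate f ^^ k) (vec_ln x) - (log_conjugate f ^^ m) (vec_ln x)) \<le> B)"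
proof -
  have "{(f ^^ k) x | k::nat. True} = range (\<lambda>k. vec_exp ((log_conjugate f ^^ k) (vec_ln x)))"
    by (auto simp: funpow_log_conjugate[OF maps x])
  then show ?thesis
    unfolding hilbert_bounded_iff by (simp add: hilbert_dist_vec_exp)
qed

lemma is_eigenvector_vec_exp_iff:
  assumes maps: "\<forall>x\<in>pos_cone. f x \<in> pos_cone"
  shows "is_eigenvector f (vec_exp y) \<longleftrightarrow> (\<exists>c. log_conjugate f y = y + vec c)"
proof
  assume "is_eigenvector f (vec_exp y)"
  then obtain l where "l > 0" "f (vec_exp y) = l *\<^sub>R vec_exp y"
    unfolding is_eigenvector_def by blast
  then have "log_conjugate f y = y + vec (ln l)"
    by (simp add: log_conjugate_def vec_ln_def vec_exp_def vec_eq_iff ln_mult_pos)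
  then show "\<exists>c. log_conjugate f y = y + vec c" ..
next
  assume "\<exists>c. log_conjugate f y = y + vec c"
  then obtain c where c: "vec_ln (f (vec_exp y)) = y + vec c"
    unfolding log_conjugate_def by blast
  have "f (vec_exp y) = vec_exp (vec_ln (f (vec_exp y)))"
    using maps vec_exp_in_pos_cone vec_exp_vec_ln by metis
  also have "\<dots> = vec_exp (y + vec c)"
    by (simp only: c)
  also have "\<dots> = exp c *\<^sub>R vec_exp y"
    by (simp add: vec_exp_def vec_eq_iff exp_add)
  finally have "f (vec_exp y) = exp c *\<^sub>R vec_exp y" .
  then show "is_eigenvector f (vec_exp y)"
    unfolding is_eigenvector_def using vec_exp_in_pos_cone exp_gt_zero by blast
qed

lemma hilbert_bounded_orbits_of_eigenvector:
  fixes f :: "real^'n \<Rightarrow> real^'n"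
  assumes maps: "\<forall>x\<in>pos_cone. f x \<in> pos_cone"
    and top: "topical (log_conjugate f)"
    and u: "is_eigenvector f u" and x: "x \<in> pos_cone"
  shows "hilbert_bounded {(f ^^ k) x | k::nat. True}"
proof -
  let ?F = "log_conjugate f"
  from u have "is_eigenvector f (vec_exp (vec_ln u))"
    by (simp add: is_eigenvector_def vec_exp_vec_ln)
  then obtain c where "?F (vec_ln u) = vec_ln u + vec c"
    using is_eigenvector_vec_exp_iff[OF maps] by blast
  then have "hilbert_seminorm ((?F^^k) (vec_ln x) - (?F^^m) (vec_ln x))
      \<le> 2 * hilbert_seminorm (vec_ln x - vec_ln u)" for k m
    by (rule topical_bounded_orbit_of_additive_eigenvector[OF top])
  then show ?thesis
    using hilbert_bounded_orbit_iff[OF maps x] by blast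
qed

lemma eigenvector_of_hilbert_bounded_orbit:
  fixes f :: "real^'n \<Rightarrow> real^'n"
  assumes maps: "\<forall>x\<in>pos_cone. f x \<in> pos_cone"
    and top: "topical (log_conjugate f)"
    and x: "x \<in> pos_cone" and bounded: "hilbert_bounded {(f ^^ k) x | k::nat. True}"
  shows "\<exists>u. is_eigenvector f u"
proof -
  let ?F = "log_conjugate f"
  obtain B where "\<And>k m. hilbert_seminorm ((?F^^k) (vec_ln x) - (?F^^m) (vec_ln x)) \<le> B"
    using hilbert_bounded_orbit_iff[OF maps x] bounded by blast
  then obtain y c where "?F y = y + vec c"
    using topical_additive_eigenvector_of_bounded_orbit[OF top] by blast
  then show ?thesis
    using is_eigenvector_vec_exp_iff[OF maps] by blast
qed

theorem theorem3:
  fixes f :: "real^'n \<Rightarrow> real^'n"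
  assumes maps: "\<forall>x\<in>pos_cone. f x \<in> pos_cone"
    and hom: "homogeneous_on_cone f"
    and mon: "monotone_on_cone f"
  shows "((\<exists>x. is_eigenvector f x) \<longleftrightarrow>
            (\<exists>x\<in>pos_cone. hilbert_bounded {(f ^^ k) x | k::nat. True}))
         \<and> ((\<exists>x. is_eigenvector f x) \<longrightarrow>
            (\<forall>x\<in>pos_cone. hilbert_bounded {(f ^^ k) x | k::nat. True}))"
proof -
  have top: "topical (log_conjugate f)"
    using maps hom mon by (rule topical_log_conjugate)
  show ?thesis
    using hilbert_bounded_orbits_of_eigenvector[OF maps top]
      eigenvector_of_hilbert_bounded_orbit[OF maps top]
    by (meson is_eigenvector_def)
qed

end
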